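(* Let $d\ge 2$, $x\in\mathbb{R}^d$, $i\in\{1,\dots,d\}$, and for $y\in\mathbb{R}^d$ write $y_{-i} := (y_1,\dots,y_{i-1},y_{i+1},\dots,y_d)^\top\in\mathbb{R}^{d-1}$. Then: 1. If $z = \Pi_{\mathcal{P}_{d,\text{even}}}(x)$ and $z_i=1$, then $z_{-i} = \Pi_{\mathcal{P}_{d-1,\text{odd}}}(x_{-i})$. 2. If $z = \Pi_{\mathcal{P}_{d,\text{even}}}(x)$ and $z_i=0$, then $z_{-i} = \Pi_{\mathcal{P}_{d-1,\text{even}}}(x_{-i})$. 3. If $z = \Pi_{\mathcal{P}_{d,\text{odd}}}(x)$ and $z_i=1$, then $z_{-i} = \Pi_{\mathcal{P}_{d-1,\text{even}}}(x_{-i})$. 4. If $z = \Pi_{\mathcal{P}_{d,\text{odd}}}(x)$ and $z_i=0$, then $z_{-i} = \Pi_{\mathcal{P}_{d-1,\text{odd}}}(x_{-i})$.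
   Context: $\mathcal{P}_{k,\text{even}} := \operatorname{conv}\{x\in\{0,1\}^k : \sum_i x_i \text{ even}\}$, $\mathcal{P}_{k,\text{odd}} := \operatorname{conv}\{x\in\{0,1\}^k : \sum_i x_i \text{ odd}\}$; $\Pi_C$ denotes Euclidean projection onto the closed convex set $C$. *)

theory Defs
  imports "HOL-Analysis.Analysis"
begin

text \<open>Vectors of R^d are represented as functions nat => real whose coordinates
  0..d-1 are the entries (0-based) and which vanish at indices >= d.\<close>

definition parity_vertices :: "nat \<Rightarrow> (nat \<Rightarrow> bool) \<Rightarrow> (nat \<Rightarrow> real) set" where
  "parity_vertices d P = {x. (\<forall>j<d. x j = 0 \<or> x j = 1) \<and> (\<forall>j\<ge>d. x j = 0)
                            \<and> P (card {j. j < d \<and> x j = 1})}"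

definition conv_fin :: "(nat \<Rightarrow> real) set \<Rightarrow> (nat \<Rightarrow> real) set" where
  "conv_fin V = {y. \<exists>\<mu>. (\<forall>v\<in>V. \<mu> v \<ge> 0) \<and> (\<Sum>v\<in>V. \<mu> v) = 1
                       \<and> y = (\<lambda>j. \<Sum>v\<in>V. \<mu> v * v j)}"

definition P_even :: "nat \<Rightarrow> (nat \<Rightarrow> real) set" where
  "P_even d = conv_fin (parity_vertices d even)"

definition P_odd :: "nat \<Rightarrow> (nat \<Rightarrow> real) set" where
  "P_odd d = conv_fin (parity_vertices d odd)"

definition dist2 :: "nat \<Rightarrow> (nat \<Rightarrow> real) \<Rightarrow> (nat \<Rightarrow> real) \<Rightarrow> real" where
  "dist2 d x y = (\<Sum>j<d. (x j - y j)^2)"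

definition proj :: "nat \<Rightarrow> (nat \<Rightarrow> real) set \<Rightarrow> (nat \<Rightarrow> real) \<Rightarrow> (nat \<Rightarrow> real)" where
  "proj d C x = (THE z. z \<in> C \<and> (\<forall>w\<in>C. dist2 d x z \<le> dist2 d x w))"

definition remove_coord :: "nat \<Rightarrow> nat \<Rightarrow> (nat \<Rightarrow> real) \<Rightarrow> (nat \<Rightarrow> real)" where
  "remove_coord d i y = (\<lambda>j. if j < d - 1 then (if j < i then y j else y (Suc j)) else 0)"

end

theory Submission
  imports Defs
begin

text \<open>For b \<in> {0,1}, the points z of a 0/1-polytope with z_i = b form a face: the convex hull
  of the vertices with i-th coordinate b. Deleting coordinate i maps the vertices of this face of
  P_d bijectively onto the vertices of the (d-1)-dimensional parity polytope whose parity is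
  shifted by b. The squared distance splits as (x_i - z_i)^2 + |x_{-i} - z_{-i}|^2, and the first
  summand is constant on the face; so if the nearest point z of P_d lies on the face, then z_{-i}
  is a nearest point of the smaller polytope, and nearest points of convex sets are unique.\<close>

lemma conv_fin_coord_eq:
  assumes "\<forall>v\<in>V. v j = c" and "y \<in> conv_fin V"
  shows "y j = c"
proof -
  obtain \<mu> where "(\<Sum>v\<in>V. \<mu> v) = 1" and "y = (\<lambda>j. \<Sum>v\<in>V. \<mu> v * v j)"
    using assms(2) unfolding conv_fin_def by blast
  then have "y j = (\<Sum>v\<in>V. \<mu> v * c)"
    using assms(1) by simp
  also have "\<dots> = c"
    using \<open>(\<Sum>v\<in>V. \<mu> v) = 1\<close> by (simp add: sum_distrib_right[symmetric])
  finally show ?thesis .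
qed

lemma conv_fin_midpoint:
  assumes "a \<in> conv_fin V" and "b \<in> conv_fin V"
  shows "(\<lambda>j. (a j + b j) / 2) \<in> conv_fin V"
proof -
  obtain \<alpha> where \<alpha>: "\<forall>v\<in>V. \<alpha> v \<ge> 0" "(\<Sum>v\<in>V. \<alpha> v) = 1" "a = (\<lambda>j. \<Sum>v\<in>V. \<alpha> v * v j)"
    using assms(1) unfolding conv_fin_def by blast
  obtain \<beta> where \<beta>: "\<forall>v\<in>V. \<beta> v \<ge> 0" "(\<Sum>v\<in>V. \<beta> v) = 1" "b = (\<lambda>j. \<Sum>v\<in>V. \<beta> v * v j)"
    using assms(2) unfolding conv_fin_def by blast
  show ?thesis
    unfolding conv_fin_def
    using \<alpha> \<beta>
    by (intro CollectI exI[of _ "\<lambda>v. (\<alpha> v + \<beta> v) / 2"] conjI)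
       (auto simp: sum_divide_distrib[symmetric] sum.distrib algebra_simps)
qed

lemma conv_fin_mono:
  assumes "finite V" and "U \<subseteq> V"
  shows "conv_fin U \<subseteq> conv_fin V"
proof
  fix y assume "y \<in> conv_fin U"
  then obtain \<mu> where \<mu>: "\<forall>u\<in>U. \<mu> u \<ge> 0" "(\<Sum>u\<in>U. \<mu> u) = 1" "y = (\<lambda>j. \<Sum>u\<in>U. \<mu> u * u j)"
    unfolding conv_fin_def by blast
  define \<nu> where "\<nu> v = (if v \<in> U then \<mu> v else 0)" for v
  have "(\<Sum>v\<in>V. \<nu> v * f v) = (\<Sum>u\<in>U. \<mu> u * f u)" for f :: "_ \<Rightarrow> real"
    using assms by (intro sum.mono_neutral_cong_right) (auto simp: \<nu>_def)
  from this[of "\<lambda>_. 1"] this[of "\<lambda>v. v _"] show "y \<in> conv_fin V"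
    unfolding conv_fin_def using \<mu> by (intro CollectI exI[of _ \<nu>]) (auto simp: \<nu>_def)
qed

lemma conv_fin_face:
  assumes "finite V" and "z \<in> conv_fin V"
    and extreme: "(\<forall>v\<in>V. v i \<le> z i) \<or> (\<forall>v\<in>V. z i \<le> v i)"
  shows "z \<in> conv_fin {v\<in>V. v i = z i}"
proof -
  obtain \<mu> where \<mu>: "\<forall>v\<in>V. \<mu> v \<ge> 0" "(\<Sum>v\<in>V. \<mu> v) = 1" "z = (\<lambda>j. \<Sum>v\<in>V. \<mu> v * v j)"
    using assms(2) unfolding conv_fin_def by blast
  have sum0: "(\<Sum>v\<in>V. \<mu> v * (v i - z i)) = 0"
    using \<mu> by (simp add: algebra_simps sum_subtractf sum_distrib_right[symmetric])
  have "\<forall>v\<in>V. \<mu> v * (v i - z i) = 0"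
    using extreme
  proof
    assume "\<forall>v\<in>V. v i \<le> z i"
    then show ?thesis
      using sum0 sum_nonneg_eq_0_iff[OF assms(1), of "\<lambda>v. - (\<mu> v * (v i - z i))"] \<mu>(1)
      by (simp add: sum_negf mult_nonneg_nonpos)
  next
    assume "\<forall>v\<in>V. z i \<le> v i"
    then show ?thesis
      using sum0 sum_nonneg_eq_0_iff[OF assms(1), of "\<lambda>v. \<mu> v * (v i - z i)"] \<mu>(1)
      by simp
  qed
  then have "(\<Sum>v\<in>{v\<in>V. v i = z i}. \<mu> v * f v) = (\<Sum>v\<in>V. \<mu> v * f v)" for f :: "_ \<Rightarrow> real"
    using assms(1) by (intro sum.mono_neutral_left) auto
  from this[of "\<lambda>_. 1"] this[of "\<lambda>v. v _"] show ?thesis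
    unfolding conv_fin_def using \<mu> by (intro CollectI exI[of _ \<mu>]) auto
qed

lemma conv_fin_image:
  assumes "finite U" and inj: "inj_on f U"
    and linear: "\<And>\<mu>. f (\<lambda>j. \<Sum>u\<in>U. \<mu> u * u j) = (\<lambda>j. \<Sum>u\<in>U. \<mu> u * f u j)"
  shows "conv_fin (f ` U) = f ` conv_fin U"
proof
  show "f ` conv_fin U \<subseteq> conv_fin (f ` U)"
  proof
    fix y assume "y \<in> f ` conv_fin U"
    then obtain \<mu> where \<mu>: "\<forall>u\<in>U. \<mu> u \<ge> 0" "(\<Sum>u\<in>U. \<mu> u) = 1"
      and y: "y = f (\<lambda>j. \<Sum>u\<in>U. \<mu> u * u j)"
      unfolding conv_fin_def by blast
    define \<nu> where "\<nu> w = \<mu> (the_inv_into U f w)" for w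
    have reindex: "(\<Sum>w\<in>f ` U. \<nu> w * g w) = (\<Sum>u\<in>U. \<mu> u * g (f u))" for g :: "_ \<Rightarrow> real"
      by (simp add: sum.reindex[OF inj] \<nu>_def the_inv_into_f_f[OF inj])
    from reindex[of "\<lambda>_. 1"] reindex[of "\<lambda>w. w _"] show "y \<in> conv_fin (f ` U)"
      unfolding conv_fin_def y linear using \<mu>
      by (intro CollectI exI[of _ \<nu>]) (auto simp: \<nu>_def the_inv_into_f_f[OF inj])
  qed
  show "conv_fin (f ` U) \<subseteq> f ` conv_fin U"
  proof
    fix y assume "y \<in> conv_fin (f ` U)"
    then obtain \<nu> where \<nu>: "\<forall>w\<in>f ` U. \<nu> w \<ge> 0" "(\<Sum>w\<in>f ` U. \<nu> w) = 1"
      and y: "y = (\<lambda>j. \<Sum>w\<in>f ` U. \<nu> w * w j)"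
      unfolding conv_fin_def by blast
    have "y = f (\<lambda>j. \<Sum>u\<in>U. \<nu> (f u) * u j)"
      unfolding y linear by (simp add: sum.reindex[OF inj])
    moreover have "(\<lambda>j. \<Sum>u\<in>U. \<nu> (f u) * u j) \<in> conv_fin U"
      unfolding conv_fin_def using \<nu> by (auto simp: sum.reindex[OF inj])
    ultimately show "y \<in> f ` conv_fin U"
      by blast
  qed
qed

lemma vertex_in_conv_fin:
  assumes "finite V" and "v \<in> V"
  shows "v \<in> conv_fin V"
  unfolding conv_fin_def using assms
  by (intro CollectI exI[of _ "\<lambda>u. of_bool (u = v)"])
     (auto simp: of_bool_def sum.delta' if_distrib[of "\<lambda>a. a * _"] cong: if_cong)

lemma compact_conv_fin:
  assumes "finite V"
  shows "compact (conv_fin V)"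
proof -
  \<comment> \<open>The weights form the standard simplex S on V in the product space, compact by Tychonoff.\<close>
  define S where "S = PiE UNIV (\<lambda>v. if v \<in> V then {0..1::real} else {0}) \<inter> {\<mu>. sum \<mu> V = 1}"
  define comb where "comb \<mu> = (\<lambda>j. \<Sum>v\<in>V. \<mu> v * v j)" for \<mu> :: "(nat \<Rightarrow> real) \<Rightarrow> real"
  have "compactin (product_topology (\<lambda>_. euclidean) UNIV)
          (PiE UNIV (\<lambda>v. if v \<in> V then {0..1::real} else {0}))"
    by (subst compactin_PiE) auto
  moreover have "closed {\<mu>::(nat \<Rightarrow> real) \<Rightarrow> real. sum \<mu> V = 1}"
    by (intro closed_Collect_eq continuous_intros) (auto intro: continuous_on_product_coordinates)
  ultimately have "compact S"
    unfolding S_def by (intro compact_Int_closed) (simp_all add: euclidean_product_topology)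
  moreover have "continuous_on S comb"
    unfolding comb_def
    by (intro continuous_intros continuous_on_subset[OF continuous_on_product_coordinates]) auto
  moreover have "conv_fin V = comb ` S"
  proof
    show "comb ` S \<subseteq> conv_fin V"
    proof (rule image_subsetI)
      fix \<mu> assume "\<mu> \<in> S"
      then show "comb \<mu> \<in> conv_fin V"
        unfolding S_def comb_def conv_fin_def
        by (intro CollectI exI[of _ \<mu>]) (auto simp: PiE_iff, metis atLeastAtMost_iff)
    qed
    show "conv_fin V \<subseteq> comb ` S"
    proof
      fix y assume "y \<in> conv_fin V"
      then obtain \<mu> where \<mu>: "\<forall>v\<in>V. \<mu> v \<ge> 0" "(\<Sum>v\<in>V. \<mu> v) = 1" "y = comb \<mu>"
        unfolding conv_fin_def comb_def by blast
      define \<mu>' where "\<mu>' v = (if v \<in> V then \<mu> v else 0)" for v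
      have "\<mu> v \<le> 1" if "v \<in> V" for v
        using member_le_sum[of v V \<mu>] assms that \<mu> by auto
      then have "\<mu>' \<in> S"
        using \<mu> by (auto simp: S_def \<mu>'_def)
      moreover have "y = comb \<mu>'"
        unfolding \<mu>(3) comb_def \<mu>'_def by simp
      ultimately show "y \<in> comb ` S"
        by blast
    qed
  qed
  ultimately show ?thesis
    by (metis compact_continuous_image)
qed

lemma continuous_on_dist2: "continuous_on A (dist2 n x)"
  unfolding dist2_def
  by (intro continuous_intros continuous_on_subset[OF continuous_on_product_coordinates]) auto

lemma conv_fin_nearest_point_exists:
  assumes "finite V" and "V \<noteq> {}"
  shows "\<exists>z\<in>conv_fin V. \<forall>w\<in>conv_fin V. dist2 n x z \<le> dist2 n x w"
proof -
  have "conv_fin V \<noteq> {}"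
    using assms vertex_in_conv_fin by blast
  then show ?thesis
    using continuous_attains_inf[OF compact_conv_fin[OF assms(1)] _ continuous_on_dist2] by blast
qed

lemma dist2_nonneg: "0 \<le> dist2 n x y"
  unfolding dist2_def by (simp add: sum_nonneg)

lemma dist2_eq_0_iff: "dist2 n x y = 0 \<longleftrightarrow> (\<forall>j<n. x j = y j)"
  unfolding dist2_def by (subst sum_nonneg_eq_0_iff) auto

lemma dist2_midpoint:
  "dist2 n x (\<lambda>j. (y j + z j) / 2) = (dist2 n x y + dist2 n x z) / 2 - dist2 n y z / 4"
proof -
  have "(x j - (y j + z j) / 2)\<^sup>2 = ((x j - y j)\<^sup>2 + (x j - z j)\<^sup>2) / 2 - (y j - z j)\<^sup>2 / 4" for j
    by (simp add: power2_eq_square field_simps)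
  then show ?thesis
    unfolding dist2_def by (simp add: sum_subtractf sum.distrib sum_divide_distrib[symmetric])
qed

lemma proj_eqI:
  assumes midpoint: "\<And>a b. a \<in> C \<Longrightarrow> b \<in> C \<Longrightarrow> (\<lambda>j. (a j + b j) / 2) \<in> C"
    and vanishing: "\<And>y j. y \<in> C \<Longrightarrow> n \<le> j \<Longrightarrow> y j = 0"
    and "z \<in> C" and nearest: "\<forall>w\<in>C. dist2 n x z \<le> dist2 n x w"
  shows "proj n C x = z"
  unfolding proj_def
proof (rule the_equality)
  show "z \<in> C \<and> (\<forall>w\<in>C. dist2 n x z \<le> dist2 n x w)"
    using assms by blast
  fix y assume y: "y \<in> C \<and> (\<forall>w\<in>C. dist2 n x y \<le> dist2 n x w)"
  then have "dist2 n x y = dist2 n x z"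
    using \<open>z \<in> C\<close> nearest by (meson antisym)
  moreover have "dist2 n x z \<le> dist2 n x (\<lambda>j. (y j + z j) / 2)"
    using nearest midpoint y \<open>z \<in> C\<close> by blast
  ultimately have "dist2 n y z = 0"
    using dist2_midpoint[of n x y z] dist2_nonneg[of n y z] by argo
  then have "y j = z j" for j
    using vanishing[of y j] vanishing[of z j] y \<open>z \<in> C\<close>
    by (cases "j < n") (auto simp: dist2_eq_0_iff)
  then show "y = z" ..
qed

lemma proj_conv_fin:
  assumes "finite V" and "V \<noteq> {}" and "\<forall>v\<in>V. \<forall>j\<ge>n. v j = 0"
  shows "proj n (conv_fin V) x \<in> conv_fin V"
    and "\<forall>w\<in>conv_fin V. dist2 n x (proj n (conv_fin V) x) \<le> dist2 n x w"
proof -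
  obtain z where z: "z \<in> conv_fin V" "\<forall>w\<in>conv_fin V. dist2 n x z \<le> dist2 n x w"
    using conv_fin_nearest_point_exists[OF assms(1,2)] by blast
  have "proj n (conv_fin V) x = z"
  proof (rule proj_eqI[OF conv_fin_midpoint _ z])
    show "y j = 0" if "y \<in> conv_fin V" and "n \<le> j" for y j
      using assms(3) that by (intro conv_fin_coord_eq[of V]) auto
  qed
  with z show "proj n (conv_fin V) x \<in> conv_fin V"
    and "\<forall>w\<in>conv_fin V. dist2 n x (proj n (conv_fin V) x) \<le> dist2 n x w"
    by simp_all
qed

lemma sum_lessThan_skip_index:
  fixes f :: "nat \<Rightarrow> 'a::comm_monoid_add"
  assumes "i < d"
  shows "(\<Sum>j<d. f j) = f i + (\<Sum>j<d - 1. f (if j < i then j else Suc j))"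
  using assms
proof (induction d)
  case 0
  then show ?case by simp
next
  case (Suc d)
  show ?case
  proof (cases "i < d")
    case True
    then obtain d' where "d = Suc d'" using not0_implies_Suc by fastforce
    with Suc True show ?thesis by (simp add: ac_simps)
  next
    case False
    with Suc.prems have "i = d" by simp
    then show ?thesis by (simp add: ac_simps)
  qed
qed

lemma dist2_remove_coord:
  assumes "i < d"
  shows "dist2 d x y = (x i - y i)\<^sup>2 + dist2 (d - 1) (remove_coord d i x) (remove_coord d i y)"
  unfolding dist2_def sum_lessThan_skip_index[OF assms]
  by (auto simp: remove_coord_def intro!: sum.cong)

lemma card_remove_coord:
  assumes "i < d"
  shows "card {j. j < d \<and> v j = 1}
           = of_bool (v i = 1) + card {j. j < d - 1 \<and> remove_coord d i v j = 1}"
proof -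
  have card_as_sum: "card {j. j < n \<and> Q j} = (\<Sum>j<n. of_bool (Q j))" for n :: nat and Q
    by (simp add: lessThan_def Collect_conj_eq)
  show ?thesis
    unfolding card_as_sum sum_lessThan_skip_index[OF assms] by (auto simp: remove_coord_def)
qed

lemma remove_coord_sum:
  "remove_coord d i (\<lambda>j. \<Sum>v\<in>V. \<mu> v * v j) = (\<lambda>j. \<Sum>v\<in>V. \<mu> v * remove_coord d i v j)"
  by (auto simp: remove_coord_def)

definition insert_coord :: "nat \<Rightarrow> real \<Rightarrow> (nat \<Rightarrow> real) \<Rightarrow> (nat \<Rightarrow> real)" where
  "insert_coord i b w = (\<lambda>j. if j < i then w j else if j = i then b else w (j - 1))"

lemma remove_coord_insert_coord:
  assumes "i < d" and "\<forall>j\<ge>d - 1. w j = 0"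
  shows "remove_coord d i (insert_coord i b w) = w"
  using assms by (auto simp: remove_coord_def insert_coord_def)

lemma insert_coord_remove_coord:
  assumes "i < d" and "\<forall>j\<ge>d. v j = 0"
  shows "insert_coord i (v i) (remove_coord d i v) = v"
  using assms by (auto simp: remove_coord_def insert_coord_def)

lemma inj_on_remove_coord:
  assumes "i < d"
  shows "inj_on (remove_coord d i) {v. (\<forall>j\<ge>d. v j = 0) \<and> v i = b}"
  using insert_coord_remove_coord[OF assms]
  by (intro inj_on_inverseI[where g = "insert_coord i b"]) auto

lemma proj_conv_fin_coordinate_face:
  assumes "i < d" and "finite V" and "V \<noteq> {}" and vanishing: "\<forall>v\<in>V. \<forall>j\<ge>d. v j = 0"
    and extreme: "(\<forall>v\<in>V. v i \<le> b) \<or> (\<forall>v\<in>V. b \<le> v i)"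
    and z: "z = proj d (conv_fin V) x" and "z i = b"
  shows "remove_coord d i z
           = proj (d - 1) (conv_fin (remove_coord d i ` {v\<in>V. v i = b})) (remove_coord d i x)"
proof -
  let ?F = "{v\<in>V. v i = b}"
  have z_in: "z \<in> conv_fin V" and z_nearest: "\<forall>w\<in>conv_fin V. dist2 d x z \<le> dist2 d x w"
    using proj_conv_fin[OF assms(2-4)] z by simp_all
  have "inj_on (remove_coord d i) ?F"
    using vanishing by (intro inj_on_subset[OF inj_on_remove_coord[OF \<open>i < d\<close>, of b]]) auto
  then have image: "conv_fin (remove_coord d i ` ?F) = remove_coord d i ` conv_fin ?F"
    using \<open>finite V\<close> by (intro conv_fin_image remove_coord_sum) simp_all
  have "z \<in> conv_fin ?F"
    using conv_fin_face[OF \<open>finite V\<close> z_in, of i] extreme \<open>z i = b\<close> by simp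
  then have "remove_coord d i z \<in> conv_fin (remove_coord d i ` ?F)"
    unfolding image by blast
  moreover have "dist2 (d - 1) (remove_coord d i x) (remove_coord d i z)
                   \<le> dist2 (d - 1) (remove_coord d i x) w"
    if w_in: "w \<in> conv_fin (remove_coord d i ` ?F)" for w
  proof -
    obtain y where y: "y \<in> conv_fin ?F" and w: "w = remove_coord d i y"
      using w_in unfolding image by blast
    have "y i = b"
      using y by (rule conv_fin_coord_eq[rotated]) simp
    moreover have "dist2 d x z \<le> dist2 d x y"
      using z_nearest conv_fin_mono[OF \<open>finite V\<close>, of ?F] y by blast
    ultimately show ?thesis
      unfolding w using dist2_remove_coord[OF \<open>i < d\<close>, of x] \<open>z i = b\<close> by simp
  qed
  moreover have "y j = 0" if "y \<in> conv_fin (remove_coord d i ` ?F)" and "d - 1 \<le> j" for y j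
    using that by (intro conv_fin_coord_eq[of "remove_coord d i ` ?F"]) (auto simp: remove_coord_def)
  ultimately show ?thesis
    by (intro proj_eqI[OF conv_fin_midpoint, symmetric]) auto
qed

lemma finite_parity_vertices: "finite (parity_vertices d P)"
proof (rule finite_subset)
  show "parity_vertices d P \<subseteq> {v. \<forall>j. (j \<in> {..<d} \<longrightarrow> v j \<in> {0, 1}) \<and> (j \<notin> {..<d} \<longrightarrow> v j = 0)}"
    unfolding parity_vertices_def by auto
  show "finite {v. \<forall>j. (j \<in> {..<d} \<longrightarrow> v j \<in> {0, 1::real}) \<and> (j \<notin> {..<d} \<longrightarrow> v j = 0)}"
    by (rule finite_set_of_finite_funs) auto
qed

lemma parity_vertices_vanishing: "\<forall>v\<in>parity_vertices d P. \<forall>j\<ge>d. v j = 0"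
  unfolding parity_vertices_def by auto

lemma parity_vertices_coord_bounds:
  assumes "v \<in> parity_vertices d P"
  shows "0 \<le> v j" and "v j \<le> 1"
  using assms unfolding parity_vertices_def by (cases "j < d"; force)+

lemma remove_coord_parity_vertices:
  assumes "i < d" and "c \<le> 1"
  shows "remove_coord d i ` {v \<in> parity_vertices d P. v i = of_nat c}
           = parity_vertices (d - 1) (\<lambda>n. P (n + c))"
proof -
  have c: "of_bool (of_nat c = (1::real)) = c"
    using assms(2) by (cases c) auto
  show ?thesis
  proof (intro equalityI subsetI)
    fix w
    assume "w \<in> remove_coord d i ` {v \<in> parity_vertices d P. v i = of_nat c}"
    then obtain v where v: "v \<in> parity_vertices d P" "v i = of_nat c"
      and w: "w = remove_coord d i v"
      by blast
    have "\<forall>j<d - 1. w j = 0 \<or> w j = 1"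
      using v(1) unfolding w parity_vertices_def remove_coord_def by auto
    moreover have "\<forall>j\<ge>d - 1. w j = 0"
      unfolding w remove_coord_def by simp
    moreover have "P (card {j. j < d - 1 \<and> w j = 1} + c)"
      using v card_remove_coord[OF \<open>i < d\<close>, of v] c unfolding w parity_vertices_def
      by (simp add: add.commute)
    ultimately show "w \<in> parity_vertices (d - 1) (\<lambda>n. P (n + c))"
      unfolding parity_vertices_def by blast
  next
    fix w
    assume w: "w \<in> parity_vertices (d - 1) (\<lambda>n. P (n + c))"
    define v where "v = insert_coord i (of_nat c) w"
    have w_vanishing: "\<forall>j\<ge>d - 1. w j = 0"
      using w unfolding parity_vertices_def by simp
    have w_rem: "remove_coord d i v = w"
      unfolding v_def using remove_coord_insert_coord[OF \<open>i < d\<close> w_vanishing] .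
    have "\<forall>j<d. v j = 0 \<or> v j = 1"
      using w assms unfolding v_def insert_coord_def parity_vertices_def by (auto simp: le_Suc_eq)
    moreover have "\<forall>j\<ge>d. v j = 0"
      using w_vanishing \<open>i < d\<close> unfolding v_def insert_coord_def by simp
    moreover have "P (card {j. j < d \<and> v j = 1})"
      using w card_remove_coord[OF \<open>i < d\<close>, of v] c unfolding w_rem parity_vertices_def
      by (simp add: v_def insert_coord_def add.commute)
    ultimately have "v \<in> {v \<in> parity_vertices d P. v i = of_nat c}"
      unfolding parity_vertices_def v_def insert_coord_def by simp
    then show "w \<in> remove_coord d i ` {v \<in> parity_vertices d P. v i = of_nat c}"
      using w_rem by blast
  qed
qed

lemma proj_parity_face:
  assumes "i < d" and "c \<le> 1" and "parity_vertices d P \<noteq> {}"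
    and "z = proj d (conv_fin (parity_vertices d P)) x" and "z i = of_nat c"
  shows "remove_coord d i z
           = proj (d - 1) (conv_fin (parity_vertices (d - 1) (\<lambda>n. P (n + c)))) (remove_coord d i x)"
proof -
  have "(\<forall>v\<in>parity_vertices d P. v i \<le> of_nat c) \<or> (\<forall>v\<in>parity_vertices d P. of_nat c \<le> v i)"
    using \<open>c \<le> 1\<close> parity_vertices_coord_bounds by (cases c) auto
  from proj_conv_fin_coordinate_face[OF \<open>i < d\<close> finite_parity_vertices assms(3)
      parity_vertices_vanishing this assms(4,5)]
  show ?thesis
    unfolding remove_coord_parity_vertices[OF \<open>i < d\<close> \<open>c \<le> 1\<close>] .
qed

lemma parity_vertices_even_nonempty: "parity_vertices d even \<noteq> {}"
proof -
  have "(\<lambda>_. 0) \<in> parity_vertices d even"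
    unfolding parity_vertices_def by simp
  then show ?thesis
    by blast
qed

lemma parity_vertices_odd_nonempty:
  assumes "0 < d"
  shows "parity_vertices d odd \<noteq> {}"
proof -
  have "{j. j < d \<and> (if j = 0 then 1 else 0 :: real) = 1} = {0}"
    using assms by auto
  then have "(\<lambda>j. if j = 0 then 1 else 0) \<in> parity_vertices d odd"
    unfolding parity_vertices_def using assms by auto
  then show ?thesis
    by blast
qed

theorem theorem5:
  fixes d i :: nat and x z :: "nat \<Rightarrow> real"
  assumes "d \<ge> 2" and "\<forall>j\<ge>d. x j = 0" and "i < d"
  shows "(z = proj d (P_even d) x \<and> z i = 1 \<longrightarrow>
            remove_coord d i z = proj (d - 1) (P_odd (d - 1)) (remove_coord d i x))
       \<and> (z = proj d (P_even d) x \<and> z i = 0 \<longrightarrow>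
            remove_coord d i z = proj (d - 1) (P_even (d - 1)) (remove_coord d i x))
       \<and> (z = proj d (P_odd d) x \<and> z i = 1 \<longrightarrow>
            remove_coord d i z = proj (d - 1) (P_even (d - 1)) (remove_coord d i x))
       \<and> (z = proj d (P_odd d) x \<and> z i = 0 \<longrightarrow>
            remove_coord d i z = proj (d - 1) (P_odd (d - 1)) (remove_coord d i x))"
proof -
  have even_nonempty: "parity_vertices d even \<noteq> {}" and odd_nonempty: "parity_vertices d odd \<noteq> {}"
    using parity_vertices_even_nonempty parity_vertices_odd_nonempty \<open>i < d\<close> by simp_all
  have shift: "(\<lambda>n. even (n + 1)) = odd" "(\<lambda>n. odd (n + 1)) = even"
    by auto
  show ?thesis
    unfolding P_even_def P_odd_def
    using proj_parity_face[OF \<open>i < d\<close> _ even_nonempty, of 1 z x]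
      proj_parity_face[OF \<open>i < d\<close> _ even_nonempty, of 0 z x]
      proj_parity_face[OF \<open>i < d\<close> _ odd_nonempty, of 1 z x]
      proj_parity_face[OF \<open>i < d\<close> _ odd_nonempty, of 0 z x]
    by (auto simp: shift)
qed

end
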